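(* Consider a Clifford circuit $C=U_d\cdots U_1$ of depth $d$ consisting of nearest-neighbor two-qubit Clifford gates on qubits located at the sites of a $D$-dimensional lattice, and let $C_t=U_t\cdots U_1$ ($C_0=I$). For any error configuration $b$, i.e. any subset of noise locations $(i,t)$ (qubit $i$, after layer $t$), let $M_b$ be the set of Pauli operators $C_t^\dagger X_iC_t$ and $C_t^\dagger Z_iC_t$ over all $(i,t)\in b$, and let $\langle M_b\rangle$ be the group they generate. Partition the lattice into hypercubic sublattices of side length $2d$ and let $G=(V,E)$ be the graph whose vertices are the sublattices, with two sublattices joined by an edge if they are adjacent (including diagonally adjacent). Let $A\subseteq V$ be the largest connected component in $G$ such that each sublattice of $A$ contains at least one non-depolarized qubit. Then there exists a Pauli operator $s$ in the centralizer $\mathsf C(\langle M_b\rangle)$ whose support meets at least half of the sublattices in $A$ and which has no support outside of (the qubits of) $A$.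
   Context: A qubit $i$ is depolarized (for configuration $b$) if both $X_i$ and $Z_i$ belong to $\langle M_b\rangle$, and non-depolarized otherwise; here $X_i$ ($Z_i$) denotes $X$ ($Z$) on qubit $i$ and identity elsewhere. The centralizer $\mathsf C(H)$ of a group $H$ of Pauli operators is the set of (phaseless) Pauli operators commuting with every element of $H$. The support of a Pauli operator is the set of qubits on which it acts non-trivially. *)

theory Defs
  imports Main
begin

text \<open>A single-qubit phaseless Pauli is a pair (x-bit, z-bit):
  I = (False,False), X = (True,False), Z = (False,True), Y = (True,True).
  A phaseless Pauli operator on qubits of type 's is a map 's => bool * bool
  (identity wherever the value is (False,False)).\<close>

type_synonym pauli1 = "bool \<times> bool"
type_synonym 's pauli = "'s \<Rightarrow> pauli1"

definition pI :: "'s pauli" where "pI = (\<lambda>k. (False, False))"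

definition pX :: "'s \<Rightarrow> 's pauli" where
  "pX i = (\<lambda>k. if k = i then (True, False) else (False, False))"

definition pZ :: "'s \<Rightarrow> 's pauli" where
  "pZ i = (\<lambda>k. if k = i then (False, True) else (False, False))"

definition add1 :: "pauli1 \<Rightarrow> pauli1 \<Rightarrow> pauli1" where
  "add1 a b = (fst a \<noteq> fst b, snd a \<noteq> snd b)"

definition pmul :: "'s pauli \<Rightarrow> 's pauli \<Rightarrow> 's pauli" where
  "pmul p q = (\<lambda>k. add1 (p k) (q k))"

definition support :: "'s pauli \<Rightarrow> 's set" where
  "support p = {k. p k \<noteq> (False, False)}"

definition pauli_on :: "'s set \<Rightarrow> 's pauli \<Rightarrow> bool" where
  "pauli_on Q p \<longleftrightarrow> support p \<subseteq> Q"

definition anti1 :: "pauli1 \<Rightarrow> pauli1 \<Rightarrow> bool" where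
  "anti1 a b \<longleftrightarrow> (fst a \<and> snd b) \<noteq> (snd a \<and> fst b)"

definition commute :: "'s set \<Rightarrow> 's pauli \<Rightarrow> 's pauli \<Rightarrow> bool" where
  "commute Q p q \<longleftrightarrow> even (card {k \<in> Q. anti1 (p k) (q k)})"

inductive_set gen :: "'s pauli set \<Rightarrow> 's pauli set" for M where
  gen_id: "pI \<in> gen M"
| gen_mul: "m \<in> M \<Longrightarrow> p \<in> gen M \<Longrightarrow> pmul m p \<in> gen M"

definition centralizer :: "'s set \<Rightarrow> 's pauli set \<Rightarrow> 's pauli set" where
  "centralizer Q H = {s. pauli_on Q s \<and> (\<forall>h\<in>H. commute Q s h)}"

type_synonym pauli2 = "pauli1 \<times> pauli1"

definition add2 :: "pauli2 \<Rightarrow> pauli2 \<Rightarrow> pauli2" where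
  "add2 u v = (add1 (fst u) (fst v), add1 (snd u) (snd v))"

definition omega2 :: "pauli2 \<Rightarrow> pauli2 \<Rightarrow> bool" where
  "omega2 u v \<longleftrightarrow> anti1 (fst u) (fst v) \<noteq> anti1 (snd u) (snd v)"

text \<open>Modulo phases, the conjugation action P |-> U^dagger P U of a two-qubit
  Clifford U is exactly a symplectic F2-linear map on the 4 bits.\<close>
definition symplectic2 :: "(pauli2 \<Rightarrow> pauli2) \<Rightarrow> bool" where
  "symplectic2 S \<longleftrightarrow> (\<forall>u v. S (add2 u v) = add2 (S u) (S v)) \<and>
                      (\<forall>u v. omega2 (S u) (S v) = omega2 u v)"

text \<open>A gate: (first qubit, second qubit, Heisenberg action on the pair).\<close>
type_synonym 's gate = "'s \<times> 's \<times> (pauli2 \<Rightarrow> pauli2)"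

definition gq1 :: "'s gate \<Rightarrow> 's" where "gq1 g = fst g"
definition gq2 :: "'s gate \<Rightarrow> 's" where "gq2 g = fst (snd g)"
definition gop :: "'s gate \<Rightarrow> pauli2 \<Rightarrow> pauli2" where "gop g = snd (snd g)"

text \<open>Action P |-> U_t^dagger P U_t of a layer (set of gates on disjoint pairs).\<close>
definition layer_act :: "'s gate set \<Rightarrow> 's pauli \<Rightarrow> 's pauli" where
  "layer_act L P = (\<lambda>k.
     if \<exists>g\<in>L. k = gq1 g \<or> k = gq2 g then
       (let g = (THE g. g \<in> L \<and> (k = gq1 g \<or> k = gq2 g));
            r = gop g (P (gq1 g), P (gq2 g))
        in if k = gq1 g then fst r else snd r)
     else P k)"

text \<open>heis layers t P = C_t^dagger P C_t where C_t = U_t ... U_1 and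
  layers t is the t-th layer U_t.\<close>
fun heis :: "(nat \<Rightarrow> 's gate set) \<Rightarrow> nat \<Rightarrow> 's pauli \<Rightarrow> 's pauli" where
  "heis layers 0 P = P"
| "heis layers (Suc t) P = heis layers t (layer_act (layers (Suc t)) P)"

text \<open>Sites of the D-dimensional lattice: integer vectors indexed by the finite
  type 'n (D = CARD('n)), in the box [0, L k) in direction k.\<close>
definition lattice :: "('n \<Rightarrow> nat) \<Rightarrow> ('n \<Rightarrow> int) set" where
  "lattice L = {x. \<forall>k. 0 \<le> x k \<and> x k < int (L k)}"

definition l1dist :: "('n::finite \<Rightarrow> int) \<Rightarrow> ('n \<Rightarrow> int) \<Rightarrow> int" where
  "l1dist x y = (\<Sum>k\<in>UNIV. \<bar>x k - y k\<bar>)"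

definition valid_gate :: "('n::finite \<Rightarrow> int) set \<Rightarrow> ('n \<Rightarrow> int) gate \<Rightarrow> bool" where
  "valid_gate Q g \<longleftrightarrow> gq1 g \<in> Q \<and> gq2 g \<in> Q \<and> l1dist (gq1 g) (gq2 g) = 1
                      \<and> symplectic2 (gop g)"

definition valid_layer :: "('n::finite \<Rightarrow> int) set \<Rightarrow> ('n \<Rightarrow> int) gate set \<Rightarrow> bool" where
  "valid_layer Q L \<longleftrightarrow> (\<forall>g\<in>L. valid_gate Q g) \<and>
     (\<forall>g\<in>L. \<forall>h\<in>L. g \<noteq> h \<longrightarrow> {gq1 g, gq2 g} \<inter> {gq1 h, gq2 h} = {})"

definition Mset :: "(nat \<Rightarrow> 's gate set) \<Rightarrow> ('s \<times> nat) set \<Rightarrow> 's pauli set" where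
  "Mset layers b = (\<Union>(i, t)\<in>b. {heis layers t (pX i), heis layers t (pZ i)})"

definition depolarized :: "(nat \<Rightarrow> 's gate set) \<Rightarrow> ('s \<times> nat) set \<Rightarrow> 's \<Rightarrow> bool" where
  "depolarized layers b i \<longleftrightarrow> pX i \<in> gen (Mset layers b) \<and> pZ i \<in> gen (Mset layers b)"

definition blk :: "nat \<Rightarrow> ('n \<Rightarrow> int) \<Rightarrow> ('n \<Rightarrow> int)" where
  "blk d x = (\<lambda>k. x k div (2 * int d))"

definition sublattice :: "nat \<Rightarrow> ('n \<Rightarrow> int) set \<Rightarrow> ('n \<Rightarrow> int) \<Rightarrow> ('n \<Rightarrow> int) set" where
  "sublattice d Q c = {x \<in> Q. blk d x = c}"

definition blocks :: "nat \<Rightarrow> ('n \<Rightarrow> int) set \<Rightarrow> ('n \<Rightarrow> int) set" where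
  "blocks d Q = blk d ` Q"

definition adj :: "('n \<Rightarrow> int) \<Rightarrow> ('n \<Rightarrow> int) \<Rightarrow> bool" where
  "adj c c' \<longleftrightarrow> c \<noteq> c' \<and> (\<forall>k. \<bar>c k - c' k\<bar> \<le> 1)"

definition connected_in :: "('n \<Rightarrow> int) set \<Rightarrow> bool" where
  "connected_in A \<longleftrightarrow> (\<forall>x\<in>A. \<forall>y\<in>A. (x, y) \<in> {(u, v). u \<in> A \<and> v \<in> A \<and> adj u v}\<^sup>*)"

definition component_of :: "('n \<Rightarrow> int) set \<Rightarrow> ('n \<Rightarrow> int) set \<Rightarrow> bool" where
  "component_of W A \<longleftrightarrow> A \<noteq> {} \<and> A \<subseteq> W \<and> connected_in A \<and>
     (\<forall>x\<in>A. \<forall>y\<in>W. adj x y \<longrightarrow> y \<in> A)"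

end

theory Submission
  imports Defs
begin

(* Commutation of phaseless Paulis is a symmetric bilinear form over F2, so p lies outside the group
   generated by a finite set M iff some Pauli commutes with M but not with p.  Hence a qubit is
   non-depolarized iff some element of the centralizer acts nontrivially on it, and every element of
   the centralizer is trivial on depolarized qubits.

   A generator C_t^dagger X_i C_t (or Z_i) lives in the light cone of radius d around i.  If it meets a
   sublattice of A, it only reaches sublattices adjacent to that one; those not in A are not in W, so
   all their qubits are depolarized.  Therefore cutting a centralizer element down to the qubits of A
   keeps it in the centralizer, and these restricted elements form a finite group U that hits every
   sublattice of A.  Multiplication by an element hitting a sublattice maps the elements of U missing it
   injectively to elements hitting it, so each sublattice of A is hit by at least half of U; averaging
   gives one element of U hitting at least half of A. *)

lemma anti1_add1_left: "anti1 (add1 a b) c \<longleftrightarrow> anti1 a c \<noteq> anti1 b c"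
  by (cases a; cases b; cases c) (auto simp: anti1_def add1_def)

lemma anti1_add1_right: "anti1 a (add1 b c) \<longleftrightarrow> anti1 a b \<noteq> anti1 a c"
  by (cases a; cases b; cases c) (auto simp: anti1_def add1_def)

lemma anti1_zero_left [simp]: "\<not> anti1 (False, False) a"
  by (simp add: anti1_def)

lemma anti1_zero_right [simp]: "\<not> anti1 a (False, False)"
  by (simp add: anti1_def)

lemma even_card_filter_xor:
  assumes "finite Q"
  shows "even (card {k\<in>Q. P k \<noteq> R k}) \<longleftrightarrow> (even (card {k\<in>Q. P k}) \<longleftrightarrow> even (card {k\<in>Q. R k}))"
  using assms
proof (induction Q rule: finite_induct)
  case (insert x F)
  have "{k\<in>insert x F. S k} = (if S x then insert x {k\<in>F. S k} else {k\<in>F. S k})" for S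
    by auto
  with insert show ?case
    by (cases "P x"; cases "R x") auto
qed simp

lemma commute_pmul_left:
  "finite Q \<Longrightarrow> commute Q (pmul p q) s \<longleftrightarrow> (commute Q p s \<longleftrightarrow> commute Q q s)"
  unfolding commute_def pmul_def anti1_add1_left by (rule even_card_filter_xor)

lemma commute_pmul_right:
  "finite Q \<Longrightarrow> commute Q s (pmul p q) \<longleftrightarrow> (commute Q s p \<longleftrightarrow> commute Q s q)"
  unfolding commute_def pmul_def anti1_add1_right by (rule even_card_filter_xor)

lemma commute_disjoint_support:
  assumes "support p \<inter> support q = {}"
  shows "commute Q p q"
proof -
  have "\<not> anti1 (p k) (q k)" for k
    using assms by (cases "k \<in> support p") (auto simp: support_def)
  then show ?thesis
    by (simp add: commute_def)
qed

lemma commute_cong: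
  assumes "\<And>k. k \<in> support q \<Longrightarrow> p' k = p k"
  shows "commute Q p' q \<longleftrightarrow> commute Q p q"
proof -
  have "anti1 (p' k) (q k) \<longleftrightarrow> anti1 (p k) (q k)" for k
    using assms by (cases "k \<in> support q") (auto simp: support_def)
  then show ?thesis
    by (simp add: commute_def)
qed

lemma commute_gen:
  assumes "finite Q" "\<forall>m\<in>M. commute Q s m" "h \<in> gen M"
  shows "commute Q s h"
  using assms(3)
proof induction
  case gen_id
  show ?case by (simp add: commute_def pI_def)
next
  case (gen_mul m p)
  then show ?case using assms(1,2) by (simp add: commute_pmul_right)
qed

lemma pmul_pI_right [simp]: "pmul p pI = p"
  by (simp add: pmul_def pI_def add1_def)

lemma pmul_cancel_left [simp]: "pmul p (pmul p q) = q"
  by (auto simp: pmul_def add1_def fun_eq_iff prod_eq_iff)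

lemma gen_mono: "h \<in> gen M \<Longrightarrow> M \<subseteq> N \<Longrightarrow> h \<in> gen N"
  by (induction rule: gen.induct) (auto intro: gen.intros)

lemma generator_in_gen: "m \<in> M \<Longrightarrow> m \<in> gen M"
  using gen_mul[OF _ gen_id] by fastforce

lemma support_pmul: "support (pmul p q) \<subseteq> support p \<union> support q"
  by (auto simp: support_def pmul_def add1_def)

lemma pauli_on_pmul: "pauli_on Q p \<Longrightarrow> pauli_on Q q \<Longrightarrow> pauli_on Q (pmul p q)"
  using support_pmul[of p q] by (auto simp: pauli_on_def)

lemma support_pX [simp]: "support (pX i) = {i}"
  by (auto simp: support_def pX_def)

lemma support_pZ [simp]: "support (pZ i) = {i}"
  by (auto simp: support_def pZ_def)

lemma pmul_in_centralizer:
  assumes "finite Q" "s \<in> centralizer Q H" "s' \<in> centralizer Q H"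
  shows "pmul s s' \<in> centralizer Q H"
  using assms by (auto simp: centralizer_def pauli_on_pmul commute_pmul_left)

lemma finite_centralizer:
  assumes "finite Q"
  shows "finite (centralizer Q H)"
proof (rule finite_subset)
  show "centralizer Q H \<subseteq> {s. \<forall>k. (k \<in> Q \<longrightarrow> s k \<in> UNIV) \<and> (k \<notin> Q \<longrightarrow> s k = (False, False))}"
    by (auto simp: centralizer_def pauli_on_def support_def)
  show "finite {s. \<forall>k. (k \<in> Q \<longrightarrow> s k \<in> UNIV) \<and> (k \<notin> Q \<longrightarrow> s k = (False, False))}"
    by (rule finite_set_of_finite_funs[OF assms]) simp
qed

lemma anticommuting_pauli_if_notin_gen:
  assumes "finite Q" "finite G" "\<forall>g\<in>G. pauli_on Q g" "pauli_on Q p" "p \<notin> gen G"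
  shows "\<exists>s. pauli_on Q s \<and> (\<forall>g\<in>G. commute Q s g) \<and> \<not> commute Q s p"
  using assms(2-)
proof (induction G arbitrary: p rule: finite_induct)
  case empty
  have "p \<noteq> pI"
    using empty.prems(3) gen_id by metis
  then obtain k where k: "p k \<noteq> (False, False)"
    by (auto simp: pI_def)
  then have "k \<in> Q"
    using empty.prems(2) by (auto simp: pauli_on_def support_def)
  define w where "w = (if fst (p k) then (False, True) else (True, False))"
  define s where "s = (\<lambda>j. if j = k then w else (False, False))"
  have "{j\<in>Q. anti1 (s j) (p j)} = {k}"
    using \<open>k \<in> Q\<close> k by (cases "p k") (auto simp: s_def w_def anti1_def)
  then have "\<not> commute Q s p"
    by (simp add: commute_def)
  moreover have "pauli_on Q s"
    using \<open>k \<in> Q\<close> by (auto simp: pauli_on_def support_def s_def)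
  ultimately show ?case
    by blast
next
  case (insert g G)
  have g: "pauli_on Q g" and G: "\<forall>h\<in>G. pauli_on Q h"
    using insert.prems(1) by auto
  have "p \<notin> gen G"
    using insert.prems(3) gen_mono[of p G "insert g G"] by blast
  then obtain s1 where s1: "pauli_on Q s1" "\<forall>h\<in>G. commute Q s1 h" "\<not> commute Q s1 p"
    using insert.IH[OF G insert.prems(2)] by blast
  have "pmul g p \<notin> gen G"
  proof
    assume "pmul g p \<in> gen G"
    then have "pmul g p \<in> gen (insert g G)"
      by (rule gen_mono) blast
    then have "pmul g (pmul g p) \<in> gen (insert g G)"
      by (rule gen_mul[rotated]) simp
    then show False
      using insert.prems(3) by simp
  qed
  then obtain s2 where s2: "pauli_on Q s2" "\<forall>h\<in>G. commute Q s2 h" "\<not> commute Q s2 (pmul g p)"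
    using insert.IH[OF G pauli_on_pmul[OF g insert.prems(2)]] by blast
  (* s1 separates p and s2 separates g p from G; one of s1, s2, s1 s2 also commutes with g *)
  consider "commute Q s1 g" | "commute Q s2 g" | "\<not> commute Q s1 g" "\<not> commute Q s2 g"
    by blast
  then show ?case
  proof cases
    case 1
    then show ?thesis using s1 by blast
  next
    case 2
    then show ?thesis using s2 commute_pmul_right[OF assms(1)] by blast
  next
    case 3
    then have "\<forall>h\<in>insert g G. commute Q (pmul s1 s2) h" and "\<not> commute Q (pmul s1 s2) p"
      using s1 s2 by (auto simp: commute_pmul_left[OF assms(1)] commute_pmul_right[OF assms(1)])
    then show ?thesis
      using s1(1) s2(1) pauli_on_pmul by blast
  qed
qed

lemma vanishes_if_commute_pX_pZ:
  assumes "i \<in> Q" "commute Q s (pX i)" "commute Q s (pZ i)"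
  shows "s i = (False, False)"
proof -
  have "{k\<in>Q. anti1 (s k) (pX i k)} = (if snd (s i) then {i} else {})"
    and "{k\<in>Q. anti1 (s k) (pZ i k)} = (if fst (s i) then {i} else {})"
    using assms(1) by (auto simp: pX_def pZ_def anti1_def)
  then show ?thesis
    using assms(2,3) by (cases "s i") (auto simp: commute_def split: if_splits)
qed

lemma centralizer_nonzero_if_not_in_gen:
  assumes "finite Q" "finite M" "\<forall>g\<in>M. pauli_on Q g" "i \<in> Q"
    and "\<not> (pX i \<in> gen M \<and> pZ i \<in> gen M)"
  shows "\<exists>s\<in>centralizer Q (gen M). s i \<noteq> (False, False)"
proof -
  obtain p where p: "p = pX i \<or> p = pZ i" "p \<notin> gen M"
    using assms(5) by blast
  then have "support p = {i}"
    by auto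
  then obtain s where s: "pauli_on Q s" "\<forall>g\<in>M. commute Q s g" "\<not> commute Q s p"
    using anticommuting_pauli_if_notin_gen[OF assms(1-3) _ p(2)] assms(4) by (auto simp: pauli_on_def)
  then have "s \<in> centralizer Q (gen M)"
    using commute_gen[OF assms(1)] by (auto simp: centralizer_def)
  moreover have "s i \<noteq> (False, False)"
    using s(3) commute_disjoint_support[of s p Q] \<open>support p = {i}\<close> by (auto simp: support_def)
  ultimately show ?thesis
    by blast
qed

definition restrict_pauli :: "'s set \<Rightarrow> 's pauli \<Rightarrow> 's pauli" where
  "restrict_pauli R s = (\<lambda>k. if k \<in> R then s k else (False, False))"

lemma support_restrict_pauli: "support (restrict_pauli R s) = support s \<inter> R"
  by (auto simp: support_def restrict_pauli_def)

lemma restrict_pauli_in_centralizer: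
  assumes "finite Q" "s \<in> centralizer Q (gen M)"
    and "\<And>g k. g \<in> M \<Longrightarrow> support g \<inter> R \<noteq> {} \<Longrightarrow> k \<in> support g - R \<Longrightarrow> s k = (False, False)"
  shows "restrict_pauli R s \<in> centralizer Q (gen M)"
proof -
  have "\<forall>g\<in>M. commute Q (restrict_pauli R s) g"
  proof
    fix g assume "g \<in> M"
    show "commute Q (restrict_pauli R s) g"
    proof (cases "support g \<inter> R = {}")
      case True
      then show ?thesis
        by (intro commute_disjoint_support) (auto simp: support_restrict_pauli)
    next
      case False
      have "commute Q s g"
        using assms(2) generator_in_gen[OF \<open>g \<in> M\<close>] by (auto simp: centralizer_def)
      moreover have "restrict_pauli R s k = s k" if "k \<in> support g" for k
        using assms(3)[OF \<open>g \<in> M\<close> False, of k] that by (auto simp: restrict_pauli_def)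
      ultimately show ?thesis
        using commute_cong by blast
    qed
  qed
  then show ?thesis
    using assms(2) commute_gen[OF assms(1)]
    by (auto simp: centralizer_def pauli_on_def support_restrict_pauli)
qed

lemma card_hitting_ge_half:
  assumes "finite U" "\<forall>u\<in>U. \<forall>v\<in>U. pmul u v \<in> U" "u0 \<in> U" "support u0 \<inter> S \<noteq> {}"
  shows "card U \<le> 2 * card {u\<in>U. support u \<inter> S \<noteq> {}}"
proof -
  let ?hit = "{u\<in>U. support u \<inter> S \<noteq> {}}"
  let ?miss = "{u\<in>U. support u \<inter> S = {}}"
  have "inj_on (pmul u0) ?miss"
    by (rule inj_onI) (metis pmul_cancel_left)
  moreover have "pmul u0 ` ?miss \<subseteq> ?hit"
  proof
    fix w assume "w \<in> pmul u0 ` ?miss"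
    then obtain u where u: "u \<in> U" "support u \<inter> S = {}" "w = pmul u0 u"
      by auto
    obtain k where k: "k \<in> support u0" "k \<in> S"
      using assms(4) by blast
    then have "u k = (False, False)"
      using u(2) by (auto simp: support_def)
    then have "k \<in> support w"
      using k(1) u(3) by (cases "u0 k") (auto simp: support_def pmul_def add1_def)
    then show "w \<in> ?hit"
      using u k assms(2,3) by auto
  qed
  ultimately have "card ?miss \<le> card ?hit"
    using assms(1) by (intro card_inj_on_le) auto
  moreover have "card U = card ?hit + card ?miss"
    using assms(1) by (subst card_Un_disjoint[symmetric]) (auto intro: arg_cong[where f = card])
  ultimately show ?thesis
    by linarith
qed

lemma sum_card_filter_swap:
  assumes "finite U" "finite A"
  shows "(\<Sum>c\<in>A. card {u\<in>U. P u c}) = (\<Sum>u\<in>U. card {c\<in>A. P u c})"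
proof -
  have "card {u\<in>U. P u c} = (\<Sum>u\<in>U. if P u c then 1 else 0)" for c
    using sum.inter_filter[OF assms(1), of "\<lambda>_. 1::nat"] by simp
  moreover have "card {c\<in>A. P u c} = (\<Sum>c\<in>A. if P u c then 1 else 0)" for u
    using sum.inter_filter[OF assms(2), of "\<lambda>_. 1::nat"] by simp
  ultimately show ?thesis
    using sum.swap by simp
qed

lemma exists_ge_average:
  assumes "finite U" "U \<noteq> {}" "finite A" "\<forall>c\<in>A. card U \<le> 2 * card {u\<in>U. P u c}"
  shows "\<exists>u\<in>U. card A \<le> 2 * card {c\<in>A. P u c}"
proof (rule ccontr)
  assume "\<not> ?thesis"
  then have "(\<Sum>u\<in>U. 2 * card {c\<in>A. P u c}) < (\<Sum>u\<in>U. card A)"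
    using assms(1,2) by (intro sum_strict_mono) auto
  also have "\<dots> = (\<Sum>c\<in>A. card U)"
    by simp
  also have "\<dots> \<le> (\<Sum>c\<in>A. 2 * card {u\<in>U. P u c})"
    using assms(4) by (intro sum_mono) auto
  also have "\<dots> = (\<Sum>u\<in>U. 2 * card {c\<in>A. P u c})"
    using sum_card_filter_swap[OF assms(1,3)] by (simp add: sum_distrib_left[symmetric])
  finally show False
    by simp
qed

lemma pauli_group_hits_half:
  assumes "finite U" "\<forall>u\<in>U. \<forall>v\<in>U. pmul u v \<in> U" "finite A" "A \<noteq> {}"
    and "\<forall>c\<in>A. \<exists>u\<in>U. support u \<inter> S c \<noteq> {}"
  shows "\<exists>u\<in>U. card A \<le> 2 * card {c\<in>A. support u \<inter> S c \<noteq> {}}"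
proof (rule exists_ge_average)
  show "U \<noteq> {}"
    using assms(4,5) by blast
  show "\<forall>c\<in>A. card U \<le> 2 * card {u\<in>U. support u \<inter> S c \<noteq> {}}"
    using assms(1,2,5) card_hitting_ge_half by blast
qed (use assms in auto)

definition near :: "int \<Rightarrow> ('n \<Rightarrow> int) \<Rightarrow> ('n \<Rightarrow> int) \<Rightarrow> bool" where
  "near r x y \<longleftrightarrow> (\<forall>k. \<bar>x k - y k\<bar> \<le> r)"

lemma near_refl: "0 \<le> r \<Longrightarrow> near r x x"
  by (simp add: near_def)

lemma near_sym: "near r x y \<Longrightarrow> near r y x"
  by (simp add: near_def abs_minus_commute)

lemma near_trans:
  assumes "near r x y" "near r' y z"
  shows "near (r + r') x z"
  unfolding near_def
proof
  fix k
  have "\<bar>x k - y k\<bar> \<le> r" "\<bar>y k - z k\<bar> \<le> r'"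
    using assms by (auto simp: near_def)
  then show "\<bar>x k - z k\<bar> \<le> r + r'"
    by arith
qed

lemma near_mono: "near r x y \<Longrightarrow> r \<le> r' \<Longrightarrow> near r' x y"
  unfolding near_def by (meson order_trans)

lemma near_if_l1dist_eq_1:
  fixes x y :: "'n::finite \<Rightarrow> int"
  assumes "l1dist x y = 1"
  shows "near 1 x y"
  unfolding near_def
proof
  fix k
  have "\<bar>x k - y k\<bar> \<le> l1dist x y"
    unfolding l1dist_def by (rule member_le_sum) auto
  then show "\<bar>x k - y k\<bar> \<le> 1"
    using assms by simp
qed

lemma abs_div_diff_le_1:
  fixes a b m :: int
  assumes "0 < m" "\<bar>a - b\<bar> \<le> m"
  shows "\<bar>a div m - b div m\<bar> \<le> 1"
proof -
  have "x div m \<le> y div m + 1" if "x \<le> y + m" for x y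
    using zdiv_mono1[OF that assms(1)] assms(1) by (simp add: div_add_self2)
  then show ?thesis
    using assms(2) by (smt (verit))
qed

lemma adj_blk_if_near:
  assumes "0 < d" "near (2 * int d) x y" "blk d x \<noteq> blk d y"
  shows "adj (blk d x) (blk d y)"
  using assms abs_div_diff_le_1[of "2 * int d"] by (auto simp: adj_def near_def blk_def)

lemma finite_lattice: "finite (lattice (L :: 'n::finite \<Rightarrow> nat))"
proof (rule finite_subset)
  let ?B = "\<Union>k. {0..<int (L k)}"
  show "lattice L \<subseteq> {x :: 'n \<Rightarrow> int. \<forall>k. (k \<in> UNIV \<longrightarrow> x k \<in> ?B) \<and> (k \<notin> UNIV \<longrightarrow> x k = 0)}"
    by (auto simp: lattice_def)
  show "finite {x :: 'n \<Rightarrow> int. \<forall>k. (k \<in> UNIV \<longrightarrow> x k \<in> ?B) \<and> (k \<notin> UNIV \<longrightarrow> x k = 0)}"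
    by (intro finite_set_of_finite_funs) auto
qed

lemma symplectic2_zero:
  assumes "symplectic2 S"
  shows "S ((False, False), (False, False)) = ((False, False), (False, False))"
proof -
  let ?z = "((False, False), (False, False))"
  have "add2 u u = ?z" for u
    by (simp add: add2_def add1_def)
  moreover have "S (add2 ?z ?z) = add2 (S ?z) (S ?z)"
    using assms by (simp add: symplectic2_def)
  ultimately show ?thesis
    by simp
qed

lemma layer_act_outside:
  "\<not> (\<exists>g\<in>L. k = gq1 g \<or> k = gq2 g) \<Longrightarrow> layer_act L P k = P k"
  by (simp add: layer_act_def)

lemma layer_act_on_gate:
  assumes "valid_layer Q L" "g \<in> L" "k = gq1 g \<or> k = gq2 g"
  shows "layer_act L P k = (if k = gq1 g then fst else snd) (gop g (P (gq1 g), P (gq2 g)))"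
proof -
  have "(THE h. h \<in> L \<and> (k = gq1 h \<or> k = gq2 h)) = g"
    using assms by (intro the_equality) (auto simp: valid_layer_def)
  then show ?thesis
    using assms(2,3) by (auto simp: layer_act_def Let_def)
qed

lemma support_layer_act:
  assumes "valid_layer Q L" "y \<in> support (layer_act L P)"
  shows "y \<in> support P \<or> (y \<in> Q \<and> (\<exists>x\<in>support P. near 1 x y))"
proof (cases "\<exists>g\<in>L. y = gq1 g \<or> y = gq2 g")
  case False
  then show ?thesis
    using assms(2) by (simp add: support_def layer_act_outside)
next
  case True
  then obtain g where g: "g \<in> L" "y = gq1 g \<or> y = gq2 g"
    by blast
  then have valid: "valid_gate Q g"
    using assms(1) by (auto simp: valid_layer_def)
  have "P (gq1 g) \<noteq> (False, False) \<or> P (gq2 g) \<noteq> (False, False)"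
  proof (rule ccontr)
    assume "\<not> ?thesis"
    moreover have "gop g ((False, False), (False, False)) = ((False, False), (False, False))"
      using valid symplectic2_zero by (simp add: valid_gate_def)
    ultimately have "layer_act L P y = (False, False)"
      using layer_act_on_gate[OF assms(1) g, of P] by simp
    then show False
      using assms(2) by (simp add: support_def)
  qed
  then obtain x where "x \<in> support P" "x = gq1 g \<or> x = gq2 g"
    by (auto simp: support_def)
  moreover have "near 1 (gq1 g) (gq2 g)"
    using valid by (simp add: valid_gate_def near_if_l1dist_eq_1)
  ultimately have "near 1 x y"
    using g(2) near_sym near_refl[of 1] by (metis zero_le_one)
  moreover have "y \<in> Q"
    using valid g(2) by (auto simp: valid_gate_def)
  ultimately show ?thesis
    using \<open>x \<in> support P\<close> by blast
qed

lemma support_heis_subset: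
  assumes "\<forall>t\<in>{1..T}. valid_layer Q (layers t)" "t \<le> T"
  shows "support (heis layers t P) \<subseteq> support P \<union> Q"
  using assms(2)
proof (induction t arbitrary: P)
  case (Suc t)
  have "support (layer_act (layers (Suc t)) P) \<subseteq> support P \<union> Q"
    using support_layer_act assms(1) Suc.prems by fastforce
  then show ?case
    using Suc by fastforce
qed simp

lemma support_heis_near:
  assumes "\<forall>t\<in>{1..T}. valid_layer Q (layers t)" "t \<le> T" "y \<in> support (heis layers t P)"
  shows "\<exists>x\<in>support P. near (int t) x y"
  using assms(2,3)
proof (induction t arbitrary: P y)
  case 0
  then show ?case
    using near_refl by fastforce
next
  case (Suc t)
  let ?P' = "layer_act (layers (Suc t)) P"
  obtain x' where x': "x' \<in> support ?P'" "near (int t) x' y"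
    using Suc by auto
  have "valid_layer Q (layers (Suc t))"
    using assms(1) Suc.prems(1) by simp
  then have "x' \<in> support P \<or> (\<exists>x\<in>support P. near 1 x x')"
    using support_layer_act x'(1) by blast
  then obtain x where "x \<in> support P" "near 1 x x'"
    using near_refl[of 1 x'] by auto
  moreover have "near (1 + int t) x y"
    using near_trans \<open>near 1 x x'\<close> x'(2) by blast
  ultimately show ?case
    by (auto simp: add.commute)
qed

lemma Mset_localized:
  assumes "\<forall>t\<in>{1..d}. valid_layer Q (layers t)" "b \<subseteq> Q \<times> {0..d}" "g \<in> Mset layers b"
  shows "support g \<subseteq> Q" and "\<exists>i. \<forall>y\<in>support g. near (int d) i y"
proof -
  obtain i t P where "(i, t) \<in> b" "g = heis layers t P" "support P = {i}"
    using assms(3) by (auto simp: Mset_def)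
  moreover from this have "i \<in> Q" "t \<le> d"
    using assms(2) by auto
  ultimately show "support g \<subseteq> Q" and "\<exists>i. \<forall>y\<in>support g. near (int d) i y"
    using support_heis_subset[OF assms(1)] support_heis_near[OF assms(1)] near_mono
    by (fastforce, metis of_nat_mono singletonD)
qed

lemma finite_Mset: "finite b \<Longrightarrow> finite (Mset layers b)"
  by (auto simp: Mset_def)

lemma depolarized_if_near_component:
  assumes "0 < d"
    and "component_of {c \<in> blocks d Q. \<exists>i \<in> sublattice d Q c. \<not> depolarized layers b i} A"
    and "y \<in> Q" "blk d y \<in> A" "z \<in> Q" "blk d z \<notin> A" "near (2 * int d) y z"
  shows "depolarized layers b z"
proof (rule ccontr)
  assume "\<not> depolarized layers b z"
  then have "blk d z \<in> {c \<in> blocks d Q. \<exists>i \<in> sublattice d Q c. \<not> depolarized layers b i}"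
    using assms(5) by (auto simp: blocks_def sublattice_def)
  moreover have "adj (blk d y) (blk d z)"
    using assms(1,4,6,7) adj_blk_if_near by metis
  ultimately show False
    using assms(2,4,6) by (auto simp: component_of_def)
qed

lemma restrict_component_in_centralizer:
  assumes "finite Q" "0 < d"
    and "\<forall>t\<in>{1..d}. valid_layer Q (layers t)" "b \<subseteq> Q \<times> {0..d}"
    and "component_of {c \<in> blocks d Q. \<exists>i \<in> sublattice d Q c. \<not> depolarized layers b i} A"
    and "s \<in> centralizer Q (gen (Mset layers b))"
  shows "restrict_pauli (\<Union>c\<in>A. sublattice d Q c) s \<in> centralizer Q (gen (Mset layers b))"
proof (rule restrict_pauli_in_centralizer[OF assms(1,6)])
  fix g z
  assume g: "g \<in> Mset layers b" and "support g \<inter> (\<Union>c\<in>A. sublattice d Q c) \<noteq> {}"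
    and z: "z \<in> support g - (\<Union>c\<in>A. sublattice d Q c)"
  then obtain y where y: "y \<in> support g" "y \<in> Q" "blk d y \<in> A"
    by (auto simp: sublattice_def)
  obtain i where i: "\<forall>x\<in>support g. near (int d) i x"
    using Mset_localized(2)[OF assms(3,4) g] by blast
  have "near (int d) i y" "near (int d) i z"
    using i y(1) z by auto
  then have "near (int d + int d) y z"
    by (rule near_trans[OF near_sym])
  then have "near (2 * int d) y z"
    by simp
  moreover have "z \<in> Q"
    using Mset_localized(1)[OF assms(3,4) g] z by blast
  moreover have "blk d z \<notin> A"
    using z \<open>z \<in> Q\<close> by (auto simp: sublattice_def)
  ultimately have "depolarized layers b z"
    using depolarized_if_near_component[OF assms(2,5) y(2,3)] by blast
  then have "commute Q s (pX z)" "commute Q s (pZ z)"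
    using assms(6) by (auto simp: depolarized_def centralizer_def)
  then show "s z = (False, False)"
    by (rule vanishes_if_commute_pX_pZ[OF \<open>z \<in> Q\<close>])
qed

lemma restricted_centralizer_hits_half:
  assumes "finite Q" "finite A" "A \<noteq> {}"
    and "\<forall>c\<in>A. \<exists>u\<in>centralizer Q H. support u \<subseteq> R \<and> support u \<inter> S c \<noteq> {}"
  shows "\<exists>u\<in>centralizer Q H. card A \<le> 2 * card {c\<in>A. support u \<inter> S c \<noteq> {}} \<and> support u \<subseteq> R"
proof -
  define U where "U = {u \<in> centralizer Q H. support u \<subseteq> R}"
  have "finite U"
    using finite_centralizer[OF assms(1)] by (simp add: U_def)
  moreover have "\<forall>u\<in>U. \<forall>v\<in>U. pmul u v \<in> U"
  proof (intro ballI)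
    fix u v assume "u \<in> U" "v \<in> U"
    then have "pmul u v \<in> centralizer Q H" "support (pmul u v) \<subseteq> R"
      using pmul_in_centralizer[OF assms(1)] support_pmul[of u v] by (auto simp: U_def)
    then show "pmul u v \<in> U"
      by (simp add: U_def)
  qed
  moreover have "\<forall>c\<in>A. \<exists>u\<in>U. support u \<inter> S c \<noteq> {}"
    unfolding U_def using assms(4) by blast
  ultimately obtain u where "u \<in> U" "card A \<le> 2 * card {c\<in>A. support u \<inter> S c \<noteq> {}}"
    using pauli_group_hits_half[OF _ _ assms(2,3)] by blast
  then show ?thesis
    by (auto simp: U_def)
qed

lemma restricted_centralizer_hits_component_block:
  assumes "finite Q" "0 < d"
    and "\<forall>t\<in>{1..d}. valid_layer Q (layers t)" "b \<subseteq> Q \<times> {0..d}"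
    and "component_of {c \<in> blocks d Q. \<exists>i \<in> sublattice d Q c. \<not> depolarized layers b i} A"
    and "c \<in> A"
  shows "\<exists>u\<in>centralizer Q (gen (Mset layers b)).
           support u \<subseteq> (\<Union>c\<in>A. sublattice d Q c) \<and> support u \<inter> sublattice d Q c \<noteq> {}"
proof -
  define R where "R = (\<Union>c\<in>A. sublattice d Q c)"
  have "finite (Mset layers b)"
    by (rule finite_Mset, rule finite_subset[OF assms(4)]) (simp add: assms(1))
  moreover have "\<forall>g\<in>Mset layers b. pauli_on Q g"
    using Mset_localized(1)[OF assms(3,4)] by (auto simp: pauli_on_def)
  moreover obtain i where i: "i \<in> sublattice d Q c" "\<not> depolarized layers b i"
    using assms(5,6) unfolding component_of_def by blast
  moreover have "i \<in> Q"
    using i(1) by (simp add: sublattice_def)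
  ultimately have "\<exists>s\<in>centralizer Q (gen (Mset layers b)). s i \<noteq> (False, False)"
    using centralizer_nonzero_if_not_in_gen[OF assms(1)] by (simp add: depolarized_def)
  then obtain s where s: "s \<in> centralizer Q (gen (Mset layers b))" "s i \<noteq> (False, False)"
    by blast
  have "restrict_pauli R s \<in> centralizer Q (gen (Mset layers b))"
    unfolding R_def by (rule restrict_component_in_centralizer[OF assms(1-5) s(1)])
  moreover have "support (restrict_pauli R s) \<subseteq> R"
    by (simp add: support_restrict_pauli)
  moreover have "i \<in> support (restrict_pauli R s) \<inter> sublattice d Q c"
    using i(1) s(2) assms(6) by (auto simp: support_def restrict_pauli_def R_def)
  ultimately show ?thesis
    unfolding R_def by blast
qed

theorem lemma3:
  fixes L :: "'n::finite \<Rightarrow> nat"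
    and d :: nat
    and layers :: "nat \<Rightarrow> ('n \<Rightarrow> int) gate set"
    and b :: "(('n \<Rightarrow> int) \<times> nat) set"
    and A :: "('n \<Rightarrow> int) set"
  defines "Q \<equiv> lattice L"
  defines "W \<equiv> {c \<in> blocks d Q. \<exists>i \<in> sublattice d Q c. \<not> depolarized layers b i}"
  assumes d_pos: "0 < d"
    and L_div: "\<forall>k. (2 * d) dvd L k"
    and layers_valid: "\<forall>t\<in>{1..d}. valid_layer Q (layers t)"
    and b_locs: "b \<subseteq> Q \<times> {0..d}"
    and A_comp: "component_of W A"
    and A_largest: "\<forall>B. component_of W B \<longrightarrow> card B \<le> card A"
  shows "\<exists>s \<in> centralizer Q (gen (Mset layers b)).
           card A \<le> 2 * card {c \<in> A. support s \<inter> sublattice d Q c \<noteq> {}}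
         \<and> support s \<subseteq> (\<Union>c\<in>A. sublattice d Q c)"
proof -
  have "finite Q"
    unfolding Q_def by (rule finite_lattice)
  have "A \<subseteq> blocks d Q" "A \<noteq> {}"
    using A_comp by (auto simp: component_of_def W_def)
  then have "finite A"
    using \<open>finite Q\<close> finite_subset by (auto simp: blocks_def)
  have "\<forall>c\<in>A. \<exists>u\<in>centralizer Q (gen (Mset layers b)).
      support u \<subseteq> (\<Union>c\<in>A. sublattice d Q c) \<and> support u \<inter> sublattice d Q c \<noteq> {}"
    using restricted_centralizer_hits_component_block[OF \<open>finite Q\<close> d_pos layers_valid b_locs]
      A_comp by (simp add: W_def)
  then show ?thesis
    by (rule restricted_centralizer_hits_half[OF \<open>finite Q\<close> \<open>finite A\<close> \<open>A \<noteq> {}\<close>])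
qed

end
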